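(* Let $\Omega\subset\mathbb{R}^2$ be a bounded domain, $X\subset\overline{\Omega}$ finite with $X\setminus\partial\Omega\subset\mathrm{int}(\mathrm{conv}(X\cap\partial\Omega))$, $f_X$ a discrete load on $X$, and $E_0,V_0>0$. Then $$\mathcal{C}_{X,\min}\ge\frac{(\mathcal{Z}_X)^2}{2E_0V_0}.$$
   Context: Discrete setting: $\bar n=\#X$, $n=\#(X\setminus\partial\Omega)$, enumeration $\chi:\{1,\dots,n\}\to X\setminus\partial\Omega$; $m=\bar n(\bar n-1)/2$, enumeration $k\mapsto\{\chi_-(k),\chi_+(k)\}$ of unordered pairs of distinct points of $X$. $f_i=f_X(\{\chi(i)\})$, $l_k=|\chi_+(k)-\chi_-(k)|$. Vectors in $\mathbb{R}^n$ are identified with functions on $X$ vanishing on $X\cap\partial\Omega$. $(\mathbf{B}_1\mathbf{u}_1+\mathbf{B}_2\mathbf{u}_2)_k=(u(\chi_+(k))-u(\chi_-(k)))\cdot(\chi_+(k)-\chi_-(k))/l_k$, $(\mathbf{D}\mathbf{w})_k=w(\chi_+(k))-w(\chi_-(k))$. $\mathrm{K}=\{(t_1,t_2,t_3):t_1,t_2\ge0,2t_1t_2\ge t_3^2\}$. $\mathcal{Z}_X:=\min\{\mathbf{l}^\top\mathbf{s}+2\mathbf{l}^\top\mathbf{r}:\mathbf{s},\mathbf{r}\in\mathbb{R}^m_+,\mathbf{q}\in\mathbb{R}^m,\mathbf{B}_1^\top\mathbf{s}=\mathbf{B}_2^\top\mathbf{s}=\mathbf{0},\mathbf{D}^\top\mathbf{q}=\mathbf{f},(r_k,s_k,q_k)\in\mathrm{K}\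 \forall k\}$ (problem $(\mathcal{P}_X)$). For $\mathbf{z}\in\mathbb{R}^n$: $\Delta_k(\mathbf{z})=(\mathbf{D}\mathbf{z})_k/l_k$, $J_{kk}(\mathbf{z})=\sqrt{1+\Delta_k(\mathbf{z})^2}$, $\hat l_k(\mathbf{z})=J_{kk}(\mathbf{z})l_k$; $\mathrm{e}_k(\mathbf{u}_1,\mathbf{u}_2)=(\mathbf{B}_1\mathbf{u}_1+\mathbf{B}_2\mathbf{u}_2)_k/l_k$; $\hat{\mathrm{e}}_k(\mathbf{u}_1,\mathbf{u}_2,\mathbf{w};\mathbf{z})=\dfrac{\mathrm{e}_k(\mathbf{u}_1,\mathbf{u}_2)+\Delta_k(\mathbf{z})\Delta_k(\mathbf{w})}{1+\Delta_k(\mathbf{z})^2}$. Compliance of $(\mathbf{z},\mathbf{a})$, $\mathbf{a}\in\mathbb{R}^m_+$: $\mathcal{C}_X(\mathbf{z},\mathbf{a})=\sup_{\mathbf{u}_1,\mathbf{u}_2,\mathbf{w}\in\mathbb{R}^n}\{\mathbf{f}^\top\mathbf{w}-\frac{E_0}{2}\sum_k((\hat{\mathrm{e}}_k(\mathbf{u}_1,\mathbf{u}_2,\mathbf{w};\mathbf{z}))_+)^2a_k\hat l_k(\mathbf{z})\}$. It is known (standard duality) that equivalently $\mathcal{C}_X(\mathbf{z},\mathbf{a})=\inf\{\frac{1}{2E_0}\sum_k\frac{\hat s_k^2}{a_k}\hat l_k(\mathbf{z}):\hat{\mathbf{s}}\in\mathbb{R}^m_+,\mathbf{B}_1^\top\mathbf{s}=\mathbf{B}_2^\top\mathbf{s}=\mathbf{0},\mathbf{D}^\top\mathbf{q}=\mathbf{f},\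 s_k=\hat s_k/J_{kk}(\mathbf{z}),q_k=\Delta_k(\mathbf{z})\hat s_k/J_{kk}(\mathbf{z})\}$ with $\hat s_k^2/a_k:=0$ if $a_k=\hat s_k=0$ and $+\infty$ if $a_k=0\neq\hat s_k$. $(\mathrm{MCGS}_X)$: $\mathcal{C}_{X,\min}=\inf\{\mathcal{C}_X(\mathbf{z},\mathbf{a}):\mathbf{z}\in\mathbb{R}^n,\mathbf{a}\in\mathbb{R}^m_+,\sum_ka_k\hat l_k(\mathbf{z})\le V_0\}$. *)

theory Defs
  imports "HOL-Analysis.Analysis"
begin

text \<open>Vectors in R^n are identified with real functions on points that vanish outside Xi.
 Bars are enumerated by k in {1..m} with endpoints cm k (chi_minus) and cp k (chi_plus).\<close>

definition interior_nodes :: "(real^2) set \<Rightarrow> (real^2) set \<Rightarrow> (real^2) set" where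
  "interior_nodes X \<Omega> = X - frontier \<Omega>"

definition nodal :: "(real^2) set \<Rightarrow> (real^2) set \<Rightarrow> (real^2 \<Rightarrow> real) \<Rightarrow> bool" where
  "nodal X \<Omega> v \<longleftrightarrow> (\<forall>x. x \<notin> interior_nodes X \<Omega> \<longrightarrow> v x = 0)"

definition bar_len :: "(nat \<Rightarrow> real^2) \<Rightarrow> (nat \<Rightarrow> real^2) \<Rightarrow> nat \<Rightarrow> real" where
  "bar_len cm cp k = norm (cp k - cm k)"

definition incid :: "(nat \<Rightarrow> real^2) \<Rightarrow> (nat \<Rightarrow> real^2) \<Rightarrow> nat \<Rightarrow> real^2 \<Rightarrow> real" where
  "incid cm cp k x = (if cp k = x then 1 else 0) - (if cm k = x then 1 else 0)"

text \<open>(B1^T s)_x and (B2^T s)_x combined into a vector of real^2.\<close>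
definition BT :: "(nat \<Rightarrow> real^2) \<Rightarrow> (nat \<Rightarrow> real^2) \<Rightarrow> nat \<Rightarrow> (nat \<Rightarrow> real) \<Rightarrow> real^2 \<Rightarrow> real^2" where
  "BT cm cp m s x = (\<Sum>k=1..m. (s k * incid cm cp k x / bar_len cm cp k) *\<^sub>R (cp k - cm k))"

definition DT :: "(nat \<Rightarrow> real^2) \<Rightarrow> (nat \<Rightarrow> real^2) \<Rightarrow> nat \<Rightarrow> (nat \<Rightarrow> real) \<Rightarrow> real^2 \<Rightarrow> real" where
  "DT cm cp m q x = (\<Sum>k=1..m. q k * incid cm cp k x)"

definition coneK :: "real \<Rightarrow> real \<Rightarrow> real \<Rightarrow> bool" where
  "coneK t1 t2 t3 \<longleftrightarrow> t1 \<ge> 0 \<and> t2 \<ge> 0 \<and> 2 * t1 * t2 \<ge> t3\<^sup>2"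

definition ZX :: "(real^2) set \<Rightarrow> (real^2) set \<Rightarrow> (nat \<Rightarrow> real^2) \<Rightarrow> (nat \<Rightarrow> real^2) \<Rightarrow> nat
   \<Rightarrow> (real^2 \<Rightarrow> real) \<Rightarrow> real" where
  "ZX X \<Omega> cm cp m f = Inf {(\<Sum>k=1..m. bar_len cm cp k * s k) + 2 * (\<Sum>k=1..m. bar_len cm cp k * r k) | s r q.
      (\<forall>k\<in>{1..m}. s k \<ge> 0 \<and> r k \<ge> 0 \<and> coneK (r k) (s k) (q k)) \<and>
      (\<forall>x\<in>interior_nodes X \<Omega>. BT cm cp m s x = 0 \<and> DT cm cp m q x = f x)}"

definition Delta :: "(nat \<Rightarrow> real^2) \<Rightarrow> (nat \<Rightarrow> real^2) \<Rightarrow> (real^2 \<Rightarrow> real) \<Rightarrow> nat \<Rightarrow> real" where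
  "Delta cm cp z k = (z (cp k) - z (cm k)) / bar_len cm cp k"

definition Jkk :: "(nat \<Rightarrow> real^2) \<Rightarrow> (nat \<Rightarrow> real^2) \<Rightarrow> (real^2 \<Rightarrow> real) \<Rightarrow> nat \<Rightarrow> real" where
  "Jkk cm cp z k = sqrt (1 + (Delta cm cp z k)\<^sup>2)"

definition lhat :: "(nat \<Rightarrow> real^2) \<Rightarrow> (nat \<Rightarrow> real^2) \<Rightarrow> (real^2 \<Rightarrow> real) \<Rightarrow> nat \<Rightarrow> real" where
  "lhat cm cp z k = Jkk cm cp z k * bar_len cm cp k"

definition strain :: "(nat \<Rightarrow> real^2) \<Rightarrow> (nat \<Rightarrow> real^2) \<Rightarrow> (real^2 \<Rightarrow> real) \<Rightarrow> (real^2 \<Rightarrow> real) \<Rightarrow> nat \<Rightarrow> real" where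
  "strain cm cp u1 u2 k =
     ((u1 (cp k) - u1 (cm k)) * (cp k - cm k)$1 + (u2 (cp k) - u2 (cm k)) * (cp k - cm k)$2)
       / bar_len cm cp k / bar_len cm cp k"

definition strain_hat :: "(nat \<Rightarrow> real^2) \<Rightarrow> (nat \<Rightarrow> real^2) \<Rightarrow> (real^2 \<Rightarrow> real) \<Rightarrow> (real^2 \<Rightarrow> real)
   \<Rightarrow> (real^2 \<Rightarrow> real) \<Rightarrow> (real^2 \<Rightarrow> real) \<Rightarrow> nat \<Rightarrow> real" where
  "strain_hat cm cp u1 u2 w z k =
     (strain cm cp u1 u2 k + Delta cm cp z k * Delta cm cp w k) / (1 + (Delta cm cp z k)\<^sup>2)"

definition CX :: "(real^2) set \<Rightarrow> (real^2) set \<Rightarrow> (nat \<Rightarrow> real^2) \<Rightarrow> (nat \<Rightarrow> real^2) \<Rightarrow> nat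
   \<Rightarrow> (real^2 \<Rightarrow> real) \<Rightarrow> real \<Rightarrow> (real^2 \<Rightarrow> real) \<Rightarrow> (nat \<Rightarrow> real) \<Rightarrow> ereal" where
  "CX X \<Omega> cm cp m f E0 z a =
     (SUP uw \<in> {(u1, u2, w). nodal X \<Omega> u1 \<and> nodal X \<Omega> u2 \<and> nodal X \<Omega> w}.
        ereal ((\<Sum>x\<in>interior_nodes X \<Omega>. f x * snd (snd uw) x)
          - E0 / 2 * (\<Sum>k=1..m. (max 0 (strain_hat cm cp (fst uw) (fst (snd uw)) (snd (snd uw)) z k))\<^sup>2
                                   * a k * lhat cm cp z k)))"

definition CXmin :: "(real^2) set \<Rightarrow> (real^2) set \<Rightarrow> (nat \<Rightarrow> real^2) \<Rightarrow> (nat \<Rightarrow> real^2) \<Rightarrow> nat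
   \<Rightarrow> (real^2 \<Rightarrow> real) \<Rightarrow> real \<Rightarrow> real \<Rightarrow> ereal" where
  "CXmin X \<Omega> cm cp m f E0 V0 =
     (INF za \<in> {(z, a). nodal X \<Omega> z \<and> (\<forall>k\<in>{1..m}. a k \<ge> 0)
                     \<and> (\<Sum>k=1..m. a k * lhat cm cp z k) \<le> V0}.
        CX X \<Omega> cm cp m f E0 (fst za) (snd za))"

end

theory Submission
  imports Defs
begin

text \<open>For fixed \<open>(z, a)\<close> the compliance is the supremum of the concave functional
  \<open>v \<mapsto> f\<cdot>w - 1/2 \<Sum>\<^sub>k W\<^sub>k (max 0 (e_hat\<^sub>k v))\<^sup>2\<close> of the nodal unknowns \<open>v = (u\<^sub>1, u\<^sub>2, w)\<close>,
  where every \<open>e_hat\<^sub>k\<close> is linear in \<open>v\<close> and \<open>W\<^sub>k = E0 a\<^sub>k l_hat\<^sub>k\<close>. If this supremum is a finite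
  \<open>C\<close>, the functional penalised by \<open>\<epsilon>/2 |v|\<^sup>2\<close> attains its maximum, and at a maximiser the
  tensions \<open>\<sigma>\<^sub>k = W\<^sub>k max 0 (e_hat\<^sub>k v) \<ge> 0\<close> balance the load up to the residual \<open>\<epsilon> v\<close>, while
  \<open>\<Sum>\<^sub>k \<sigma>\<^sub>k\<^sup>2 / W\<^sub>k \<le> 2 C\<close>. Letting \<open>\<epsilon> \<rightarrow> 0\<close> along a subsequence yields nonnegative tensions in
  exact equilibrium. Rescaled by \<open>1 + \<Delta>\<^sub>k\<^sup>2\<close> they are a feasible point of \<open>(P_X)\<close> of cost
  \<open>\<Sum>\<^sub>k \<sigma>\<^sub>k\<close>, and by Cauchy-Schwarz \<open>(\<Sum>\<^sub>k \<sigma>\<^sub>k)\<^sup>2 \<le> 2 C \<Sum>\<^sub>k W\<^sub>k \<le> 2 C E0 V0\<close>.\<close>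

lemma finite_bounded_imp_convergent_subseq:
  fixes s :: "nat \<Rightarrow> 'a \<Rightarrow> real"
  assumes "finite A" and "\<And>n x. x \<in> A \<Longrightarrow> \<bar>s n x\<bar> \<le> B x"
  shows "\<exists>r g. strict_mono r \<and> (\<forall>x\<in>A. (\<lambda>n. s (r n) x) \<longlonglongrightarrow> g x)"
  using assms
proof (induction A rule: finite_induct)
  case empty
  show ?case by (rule exI[of _ id]) (auto simp: strict_mono_def)
next
  case (insert a A)
  then obtain r g where r: "strict_mono r" and g: "\<forall>x\<in>A. (\<lambda>n. s (r n) x) \<longlonglongrightarrow> g x"
    by blast
  have "bounded (range (\<lambda>n. s (r n) a))"
    unfolding bounded_iff using insert.prems by auto
  then obtain l r' where r': "strict_mono r'" and l: "((\<lambda>n. s (r n) a) \<circ> r') \<longlonglongrightarrow> l"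
    using bounded_imp_convergent_subsequence by blast
  have "(\<lambda>n. s ((r \<circ> r') n) x) \<longlonglongrightarrow> (g(a := l)) x" if "x \<in> insert a A" for x
  proof (cases "x = a")
    case True
    then show ?thesis using l by (simp add: comp_def)
  next
    case False
    then have "((\<lambda>n. s (r n) x) \<circ> r') \<longlonglongrightarrow> g x"
      using g that r' LIMSEQ_subseq_LIMSEQ by blast
    then show ?thesis using False by (simp add: comp_def)
  qed
  moreover have "strict_mono (r \<circ> r')" using r r' by (simp add: strict_mono_o)
  ultimately show ?case by blast
qed

lemma LIMSEQ_zero_if_sq_le:
  fixes y b :: "nat \<Rightarrow> real"
  assumes "\<And>n. (y n)\<^sup>2 \<le> b n" and "b \<longlonglongrightarrow> 0"
  shows "y \<longlonglongrightarrow> 0"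
proof (rule Lim_null_comparison)
  show "\<forall>\<^sub>F n in sequentially. norm (y n) \<le> sqrt (b n)"
    using assms(1) by (intro always_eventually allI) (simp add: real_le_rsqrt)
  show "(\<lambda>n. sqrt (b n)) \<longlonglongrightarrow> 0"
    using tendsto_real_sqrt[OF assms(2)] by simp
qed

lemma eq_0_if_linear_le_quadratic:
  fixes b c :: real
  assumes "\<And>t. t * b \<le> t\<^sup>2 * c"
  shows "b = 0"
proof -
  define d where "d = \<bar>c\<bar> + 1"
  have d: "d > 0" "c < d" by (auto simp: d_def)
  have "b / d * b \<le> (b / d)\<^sup>2 * c" by (rule assms)
  then have "b\<^sup>2 * d \<le> b\<^sup>2 * c"
    using d by (simp add: power2_eq_square field_simps)
  then show "b = 0"
    using d mult_le_cancel_left_pos[of "b\<^sup>2" d c] by fastforce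
qed

lemma pos_part_sq_add_le:
  fixes p d :: real
  shows "(max 0 (p + d))\<^sup>2 \<le> (max 0 p)\<^sup>2 + 2 * max 0 p * d + d\<^sup>2"
  by (smt (verit, best) power2_sum power_mono sum_power2_ge_zero zero_power2)

lemma sum_mult_add_scale:
  fixes c v h :: "'a \<Rightarrow> real"
  shows "(\<Sum>i\<in>A. c i * (v i + t * h i)) = (\<Sum>i\<in>A. c i * v i) + t * (\<Sum>i\<in>A. c i * h i)"
  by (simp add: sum.distrib sum_distrib_left algebra_simps)

locale one_sided_quadratic =
  fixes D :: "'i set" and K :: "'k set"
    and l :: "'i \<Rightarrow> real" and E :: "'k \<Rightarrow> 'i \<Rightarrow> real" and w :: "'k \<Rightarrow> real"
  assumes finite_D: "finite D" and finite_K: "finite K"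
    and weight_nonneg: "\<And>k. k \<in> K \<Longrightarrow> 0 \<le> w k"
begin

definition load :: "('i \<Rightarrow> real) \<Rightarrow> real" where
  "load v = (\<Sum>i\<in>D. l i * v i)"

definition stretch :: "'k \<Rightarrow> ('i \<Rightarrow> real) \<Rightarrow> real" where
  "stretch k v = (\<Sum>i\<in>D. E k i * v i)"

definition tension :: "('i \<Rightarrow> real) \<Rightarrow> 'k \<Rightarrow> real" where
  "tension v k = w k * max 0 (stretch k v)"

definition penalty :: "('i \<Rightarrow> real) \<Rightarrow> real" where
  "penalty v = (\<Sum>k\<in>K. w k * (max 0 (stretch k v))\<^sup>2)"

definition energy :: "('i \<Rightarrow> real) \<Rightarrow> real" where
  "energy v = load v - penalty v / 2"

definition sqnorm :: "('i \<Rightarrow> real) \<Rightarrow> real" where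
  "sqnorm v = (\<Sum>i\<in>D. (v i)\<^sup>2)"

definition reg_energy :: "real \<Rightarrow> ('i \<Rightarrow> real) \<Rightarrow> real" where
  "reg_energy e v = energy v - e / 2 * sqnorm v"

lemma penalty_nonneg: "0 \<le> penalty v"
  unfolding penalty_def using weight_nonneg by (intro sum_nonneg) auto

lemma sqnorm_nonneg: "0 \<le> sqnorm v"
  unfolding sqnorm_def by (intro sum_nonneg) auto

lemma sq_le_sqnorm: "i \<in> D \<Longrightarrow> (v i)\<^sup>2 \<le> sqnorm v"
  unfolding sqnorm_def using finite_D by (intro member_le_sum) auto

lemma energy_zero: "energy (\<lambda>_. 0) = 0"
  by (simp add: energy_def load_def penalty_def stretch_def)

lemma reg_energy_le_energy: "0 \<le> e \<Longrightarrow> reg_energy e v \<le> energy v"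
  unfolding reg_energy_def using sqnorm_nonneg by simp

lemma tension_sq_le: "k \<in> K \<Longrightarrow> (tension v k)\<^sup>2 \<le> w k * penalty v"
proof -
  assume k: "k \<in> K"
  have "w k * (max 0 (stretch k v))\<^sup>2 \<le> penalty v"
    unfolding penalty_def using k finite_K weight_nonneg by (intro member_le_sum) auto
  then have "w k * (w k * (max 0 (stretch k v))\<^sup>2) \<le> w k * penalty v"
    using weight_nonneg[OF k] by (rule mult_left_mono)
  then show ?thesis by (simp add: tension_def power2_eq_square algebra_simps)
qed

lemma tension_sum_sq_le: "(\<Sum>k\<in>K. tension v k)\<^sup>2 \<le> (\<Sum>k\<in>K. w k) * penalty v"
proof -
  have "(\<Sum>k\<in>K. tension v k) = (\<Sum>k\<in>K. sqrt (w k) * (sqrt (w k) * max 0 (stretch k v)))"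
    using weight_nonneg by (intro sum.cong) (auto simp: tension_def simp flip: mult.assoc)
  also have "(\<dots>)\<^sup>2 \<le> (\<Sum>k\<in>K. (sqrt (w k))\<^sup>2) * (\<Sum>k\<in>K. (sqrt (w k) * max 0 (stretch k v))\<^sup>2)"
    by (rule Cauchy_Schwarz_ineq_sum)
  also have "\<dots> = (\<Sum>k\<in>K. w k) * penalty v"
    unfolding penalty_def using weight_nonneg by (intro arg_cong2[where f = "(*)"] sum.cong)
      (auto simp: power_mult_distrib)
  finally show ?thesis .
qed

lemma penalty_add_scale_le:
  "penalty (\<lambda>i. v i + t * h i)
     \<le> penalty v + 2 * t * (\<Sum>k\<in>K. tension v k * stretch k h) + t\<^sup>2 * (\<Sum>k\<in>K. w k * (stretch k h)\<^sup>2)"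
proof -
  have "penalty (\<lambda>i. v i + t * h i) = (\<Sum>k\<in>K. w k * (max 0 (stretch k v + t * stretch k h))\<^sup>2)"
    by (simp add: penalty_def stretch_def sum_mult_add_scale)
  also have "\<dots> \<le> (\<Sum>k\<in>K. w k * ((max 0 (stretch k v))\<^sup>2 + 2 * max 0 (stretch k v) * (t * stretch k h)
                                     + (t * stretch k h)\<^sup>2))"
    using weight_nonneg pos_part_sq_add_le by (intro sum_mono mult_left_mono) auto
  also have "\<dots> = penalty v + 2 * t * (\<Sum>k\<in>K. tension v k * stretch k h) + t\<^sup>2 * (\<Sum>k\<in>K. w k * (stretch k h)\<^sup>2)"
    by (simp add: penalty_def tension_def sum.distrib sum_distrib_left algebra_simps power2_eq_square)
  finally show ?thesis .
qed

lemma sqnorm_add_scale: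
  "sqnorm (\<lambda>i. v i + t * h i) = sqnorm v + 2 * t * (\<Sum>i\<in>D. v i * h i) + t\<^sup>2 * sqnorm h"
  by (simp add: sqnorm_def sum.distrib sum_distrib_left algebra_simps power2_eq_square)

lemma maximizer_first_order:
  assumes max: "\<And>u. reg_energy e u \<le> reg_energy e v" and e: "0 \<le> e"
  shows "(\<Sum>k\<in>K. tension v k * stretch k h) = load h - e * (\<Sum>i\<in>D. v i * h i)"
proof -
  define G where "G = (\<Sum>k\<in>K. tension v k * stretch k h)"
  define M where "M = (\<Sum>k\<in>K. w k * (stretch k h)\<^sup>2) / 2 + e / 2 * sqnorm h"
  have "t * (load h - G - e * (\<Sum>i\<in>D. v i * h i)) \<le> t\<^sup>2 * M" for t
  proof -
    have load: "load (\<lambda>i. v i + t * h i) = load v + t * load h"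
      by (simp add: load_def sum_mult_add_scale)
    have "reg_energy e v + t * (load h - G - e * (\<Sum>i\<in>D. v i * h i)) - t\<^sup>2 * M
          \<le> reg_energy e (\<lambda>i. v i + t * h i)"
      using penalty_add_scale_le[of v t h]
      unfolding reg_energy_def energy_def load sqnorm_add_scale G_def M_def
      by (simp add: algebra_simps)
    then show ?thesis using max[of "\<lambda>i. v i + t * h i"] by simp
  qed
  then show ?thesis unfolding G_def using eq_0_if_linear_le_quadratic by fastforce
qed

lemma maximizer_balance:
  assumes "\<And>u. reg_energy e u \<le> reg_energy e v" and "0 \<le> e" and i: "i \<in> D"
  shows "(\<Sum>k\<in>K. tension v k * E k i) = l i - e * v i"
proof -
  let ?h = "\<lambda>j. if j = i then 1 else 0 :: real"
  have "stretch k ?h = E k i" "load ?h = l i" "(\<Sum>j\<in>D. v j * ?h j) = v i" for k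
    using finite_D i by (simp_all add: stretch_def load_def if_distrib cong: if_cong)
  then show ?thesis using maximizer_first_order[OF assms(1,2), of ?h] by simp
qed

lemma maximizer_value:
  assumes "\<And>u. reg_energy e u \<le> reg_energy e v" and "0 \<le> e"
  shows "reg_energy e v = penalty v / 2 + e / 2 * sqnorm v"
proof -
  have "tension v k * stretch k v = w k * (max 0 (stretch k v))\<^sup>2" for k
    by (simp add: tension_def max_def power2_eq_square)
  then have "penalty v = load v - e * sqnorm v"
    using maximizer_first_order[OF assms, of v]
    by (simp add: penalty_def sqnorm_def power2_eq_square)
  then show ?thesis by (simp add: reg_energy_def energy_def field_simps)
qed

lemma maximizer_estimates:
  assumes max: "\<And>u. reg_energy e u \<le> reg_energy e v" and e: "0 \<le> e"
    and bound: "\<And>u. energy u \<le> C"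
  shows "k \<in> K \<Longrightarrow> \<bar>tension v k\<bar> \<le> sqrt (w k * (2 * C))"
    and "(\<Sum>k\<in>K. tension v k)\<^sup>2 \<le> 2 * C * (\<Sum>k\<in>K. w k)"
    and "i \<in> D \<Longrightarrow> (e * v i)\<^sup>2 \<le> e * (2 * C)"
proof -
  have "penalty v / 2 + e / 2 * sqnorm v \<le> C"
    using maximizer_value[OF max e] reg_energy_le_energy[OF e, of v] bound[of v] by linarith
  moreover have "0 \<le> e * sqnorm v" using e sqnorm_nonneg by simp
  ultimately have pen: "penalty v \<le> 2 * C" and res: "e * sqnorm v \<le> 2 * C"
    using penalty_nonneg[of v] by linarith+
  show "\<bar>tension v k\<bar> \<le> sqrt (w k * (2 * C))" if "k \<in> K"
    using order_trans[OF tension_sq_le[OF that] mult_left_mono[OF pen weight_nonneg[OF that]]]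
    by (simp add: real_le_rsqrt)
  have "(\<Sum>k\<in>K. w k) * penalty v \<le> (\<Sum>k\<in>K. w k) * (2 * C)"
    using pen weight_nonneg by (intro mult_left_mono sum_nonneg) auto
  then show "(\<Sum>k\<in>K. tension v k)\<^sup>2 \<le> 2 * C * (\<Sum>k\<in>K. w k)"
    using tension_sum_sq_le[of v] by (simp add: mult.commute)
  show "(e * v i)\<^sup>2 \<le> e * (2 * C)" if "i \<in> D"
  proof -
    have "e * (v i)\<^sup>2 \<le> e * sqnorm v"
      using sq_le_sqnorm[OF that] e by (intro mult_left_mono)
    also have "\<dots> \<le> 2 * C" by (rule res)
    finally have "e * (e * (v i)\<^sup>2) \<le> e * (2 * C)"
      using e by (intro mult_left_mono)
    then show ?thesis by (simp add: power2_eq_square mult.assoc mult.left_commute)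
  qed
qed

lemma tendsto_reg_energy:
  assumes "\<And>i. i \<in> D \<Longrightarrow> (\<lambda>n. u n i) \<longlonglongrightarrow> g i"
  shows "(\<lambda>n. reg_energy e (u n)) \<longlonglongrightarrow> reg_energy e g"
  unfolding reg_energy_def energy_def load_def penalty_def stretch_def sqnorm_def
  by (intro tendsto_intros assms) simp_all

lemma reg_energy_has_maximizer:
  assumes bound: "\<And>u. energy u \<le> C" and e: "0 < e"
  shows "\<exists>v. \<forall>u. reg_energy e u \<le> reg_energy e v"
proof -
  let ?S = "Sup (range (reg_energy e))"
  have "reg_energy e u \<le> C" for u
    using reg_energy_le_energy[of e u] bound[of u] e by simp
  then have bdd: "bdd_above (range (reg_energy e))"
    by (intro bdd_aboveI2)
  then have "?S \<in> closure (range (reg_energy e))"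
    by (intro closure_contains_Sup) auto
  then obtain y where "\<forall>n. \<exists>u. y n = reg_energy e u" and y_lim: "y \<longlonglongrightarrow> ?S"
    unfolding closure_sequential by blast
  then obtain u where "y = (\<lambda>n. reg_energy e (u n))"
    by (metis choice)
  with y_lim have u_lim: "(\<lambda>n. reg_energy e (u n)) \<longlonglongrightarrow> ?S"
    by simp
  then obtain B where "\<And>n. norm (reg_energy e (u n)) \<le> B"
    using convergent_imp_Bseq[of "\<lambda>n. reg_energy e (u n)"] by (auto simp: convergent_def Bseq_def)
  then have "e * sqnorm (u n) \<le> 2 * (C + B)" for n
    using bound[of "u n"] abs_le_D2[of "reg_energy e (u n)" B] unfolding reg_energy_def by simp
  then have "e * (u n i)\<^sup>2 \<le> 2 * (C + B)" if "i \<in> D" for n i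
    using mult_left_mono[OF sq_le_sqnorm[OF that, of "u n"], of e] e by (meson less_imp_le order_trans)
  then have "(u n i)\<^sup>2 \<le> 2 * (C + B) / e" if "i \<in> D" for n i
    using that e by (simp add: pos_le_divide_eq mult.commute)
  then have "\<bar>u n i\<bar> \<le> sqrt (2 * (C + B) / e)" if "i \<in> D" for n i
    using that by (simp add: real_le_rsqrt)
  then obtain r g where r: "strict_mono r" and g: "\<forall>i\<in>D. (\<lambda>n. u (r n) i) \<longlonglongrightarrow> g i"
    using finite_bounded_imp_convergent_subseq[OF finite_D, of u "\<lambda>_. sqrt (2 * (C + B) / e)"] by blast
  have "(\<lambda>n. reg_energy e (u (r n))) \<longlonglongrightarrow> reg_energy e g"
    using g by (intro tendsto_reg_energy) auto
  moreover have "(\<lambda>n. reg_energy e (u (r n))) \<longlonglongrightarrow> ?S"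
    using LIMSEQ_subseq_LIMSEQ[OF u_lim r] by (simp add: comp_def)
  ultimately have "reg_energy e g = ?S" by (rule LIMSEQ_unique)
  then show ?thesis using cSUP_upper[OF UNIV_I bdd] by metis
qed

theorem bounded_energy_imp_balancing_tensions:
  assumes bound: "\<And>u. energy u \<le> C"
  shows "\<exists>\<sigma>. (\<forall>k\<in>K. 0 \<le> \<sigma> k) \<and> (\<forall>i\<in>D. (\<Sum>k\<in>K. \<sigma> k * E k i) = l i)
             \<and> (\<Sum>k\<in>K. \<sigma> k)\<^sup>2 \<le> 2 * C * (\<Sum>k\<in>K. w k)"
proof -
  define e where "e n = inverse (real (Suc n))" for n
  have e_pos: "0 < e n" for n
    by (simp add: e_def)
  obtain v where max: "\<And>n u. reg_energy (e n) u \<le> reg_energy (e n) (v n)"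
    using reg_energy_has_maximizer[OF bound e_pos] by metis
  note estimates = maximizer_estimates[OF max less_imp_le[OF e_pos] bound]
  obtain r \<sigma> where r: "strict_mono r" and \<sigma>: "\<forall>k\<in>K. (\<lambda>n. tension (v (r n)) k) \<longlonglongrightarrow> \<sigma> k"
    using finite_bounded_imp_convergent_subseq[OF finite_K, of "\<lambda>n. tension (v n)"
        "\<lambda>k. sqrt (w k * (2 * C))"] estimates(1)
    by blast
  have bound_lim: "(\<lambda>n. e (r n) * (2 * C)) \<longlonglongrightarrow> 0"
    using LIMSEQ_subseq_LIMSEQ[OF LIMSEQ_inverse_real_of_nat r]
    by (auto simp: e_def comp_def intro: tendsto_mult_left_zero)
  have residual: "(\<lambda>n. e (r n) * v (r n) i) \<longlonglongrightarrow> 0" if "i \<in> D" for i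
  proof (rule LIMSEQ_zero_if_sq_le)
    show "(e (r n) * v (r n) i)\<^sup>2 \<le> e (r n) * (2 * C)" for n
      using estimates(3)[OF that] .
  qed (rule bound_lim)
  show ?thesis
  proof (intro exI conjI ballI)
    show "0 \<le> \<sigma> k" if "k \<in> K" for k
      using \<sigma> that weight_nonneg[OF that]
      by (intro LIMSEQ_le_const[of "\<lambda>n. tension (v (r n)) k"]) (auto simp: tension_def)
    show "(\<Sum>k\<in>K. \<sigma> k * E k i) = l i" if "i \<in> D" for i
    proof (rule LIMSEQ_unique)
      show "(\<lambda>n. \<Sum>k\<in>K. tension (v (r n)) k * E k i) \<longlonglongrightarrow> (\<Sum>k\<in>K. \<sigma> k * E k i)"
        using \<sigma> by (intro tendsto_intros) auto
      show "(\<lambda>n. \<Sum>k\<in>K. tension (v (r n)) k * E k i) \<longlonglongrightarrow> l i"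
        using tendsto_diff[OF tendsto_const residual[OF that], of "l i"] that
        by (simp add: maximizer_balance[OF max less_imp_le[OF e_pos]])
    qed
    show "(\<Sum>k\<in>K. \<sigma> k)\<^sup>2 \<le> 2 * C * (\<Sum>k\<in>K. w k)"
    proof (rule LIMSEQ_le_const2)
      show "(\<lambda>n. (\<Sum>k\<in>K. tension (v (r n)) k)\<^sup>2) \<longlonglongrightarrow> (\<Sum>k\<in>K. \<sigma> k)\<^sup>2"
        using \<sigma> by (intro tendsto_intros) auto
      show "\<exists>N. \<forall>n\<ge>N. (\<Sum>k\<in>K. tension (v (r n)) k)\<^sup>2 \<le> 2 * C * (\<Sum>k\<in>K. w k)"
        using estimates(2) by blast
    qed
  qed
qed

end

text \<open>A nodal unknown is indexed by \<open>(x, j)\<close>: \<open>j = 1, 2\<close> are the components of the in-plane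
  displacement \<open>u\<close> at \<open>x\<close> and \<open>j = 3\<close> is the deflection \<open>w\<close>. The function
  \<open>strain_hat_coeff cm cp z k\<close> holds the coefficients of the linear form \<open>strain_hat \<dots> z k\<close>.\<close>

definition dofs :: "(real^2) set \<Rightarrow> (real^2) set \<Rightarrow> ((real^2) \<times> nat) set" where
  "dofs X \<Omega> = interior_nodes X \<Omega> \<times> {1, 2, 3}"

definition dof_field :: "(real^2) set \<Rightarrow> (real^2) set \<Rightarrow> ((real^2) \<times> nat \<Rightarrow> real) \<Rightarrow> nat
   \<Rightarrow> real^2 \<Rightarrow> real" where
  "dof_field X \<Omega> v j x = (if x \<in> interior_nodes X \<Omega> then v (x, j) else 0)"

definition dof_load :: "(real^2 \<Rightarrow> real) \<Rightarrow> (real^2) \<times> nat \<Rightarrow> real" where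
  "dof_load f = (\<lambda>(x, j). if j = 3 then f x else 0)"

definition strain_hat_coeff :: "(nat \<Rightarrow> real^2) \<Rightarrow> (nat \<Rightarrow> real^2) \<Rightarrow> (real^2 \<Rightarrow> real) \<Rightarrow> nat
   \<Rightarrow> (real^2) \<times> nat \<Rightarrow> real" where
  "strain_hat_coeff cm cp z k = (\<lambda>(x, j). incid cm cp k x / (1 + (Delta cm cp z k)\<^sup>2) *
     (if j = 1 then (cp k - cm k) $ 1 / (bar_len cm cp k)\<^sup>2
      else if j = 2 then (cp k - cm k) $ 2 / (bar_len cm cp k)\<^sup>2
      else Delta cm cp z k / bar_len cm cp k))"

lemma nodal_dof_field: "nodal X \<Omega> (dof_field X \<Omega> v j)"
  by (simp add: nodal_def dof_field_def)

lemma nodal_diff_eq_sum_incid: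
  assumes "nodal X \<Omega> u" and "finite (interior_nodes X \<Omega>)"
  shows "u (cp k) - u (cm k) = (\<Sum>x\<in>interior_nodes X \<Omega>. incid cm cp k x * u x)"
proof -
  have "incid cm cp k x * u x = (if cp k = x then u x else 0) - (if cm k = x then u x else 0)" for x
    by (simp add: incid_def)
  then show ?thesis
    using assms by (simp add: sum_subtractf nodal_def)
qed

lemma sum_dofs:
  "(\<Sum>xj\<in>dofs X \<Omega>. g xj) = (\<Sum>x\<in>interior_nodes X \<Omega>. g (x, 1) + g (x, 2) + g (x, 3))"
  by (simp add: dofs_def sum.cartesian_product' add.assoc)

lemma load_dofs:
  "(\<Sum>xj\<in>dofs X \<Omega>. dof_load f xj * v xj) = (\<Sum>x\<in>interior_nodes X \<Omega>. f x * dof_field X \<Omega> v 3 x)"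
  by (simp add: sum_dofs dof_load_def dof_field_def)

lemma strain_hat_dof_fields:
  assumes "finite (interior_nodes X \<Omega>)"
  shows "strain_hat cm cp (dof_field X \<Omega> v 1) (dof_field X \<Omega> v 2) (dof_field X \<Omega> v 3) z k
       = (\<Sum>xj\<in>dofs X \<Omega>. strain_hat_coeff cm cp z k xj * v xj)"
proof -
  let ?I = "interior_nodes X \<Omega>" and ?\<Delta> = "Delta cm cp z k" and ?l = "bar_len cm cp k"
  define S where "S j = (\<Sum>x\<in>?I. incid cm cp k x * v (x, j))" for j
  have diff: "dof_field X \<Omega> v j (cp k) - dof_field X \<Omega> v j (cm k) = S j" for j
    unfolding nodal_diff_eq_sum_incid[OF nodal_dof_field assms] S_def
    by (intro sum.cong) (auto simp: dof_field_def)
  have "(\<Sum>xj\<in>dofs X \<Omega>. strain_hat_coeff cm cp z k xj * v xj)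
      = (\<Sum>x\<in>?I. 1 / (1 + ?\<Delta>\<^sup>2) * ((cp k - cm k) $ 1 / ?l\<^sup>2 * (incid cm cp k x * v (x, 1))
          + (cp k - cm k) $ 2 / ?l\<^sup>2 * (incid cm cp k x * v (x, 2)) + ?\<Delta> / ?l * (incid cm cp k x * v (x, 3))))"
    unfolding sum_dofs strain_hat_coeff_def by (intro sum.cong refl) (simp add: divide_inverse algebra_simps)
  also have "\<dots> = 1 / (1 + ?\<Delta>\<^sup>2) * ((cp k - cm k) $ 1 / ?l\<^sup>2 * S 1 + (cp k - cm k) $ 2 / ?l\<^sup>2 * S 2
      + ?\<Delta> / ?l * S 3)"
    by (simp only: S_def sum_distrib_left sum.distrib[symmetric])
  finally show ?thesis
    unfolding strain_hat_def strain_def Delta_def[of cm cp "dof_field X \<Omega> v 3"] diff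
    by (simp add: divide_inverse power2_eq_square algebra_simps)
qed

lemma ZX_le_sum_of_balancing_tensions:
  assumes distinct: "\<And>k. k \<in> {1..m} \<Longrightarrow> cm k \<noteq> cp k"
    and nonneg: "\<forall>k\<in>{1..m}. 0 \<le> \<sigma> k"
    and balance: "\<forall>xj\<in>dofs X \<Omega>. (\<Sum>k=1..m. \<sigma> k * strain_hat_coeff cm cp z k xj) = dof_load f xj"
  shows "0 \<le> ZX X \<Omega> cm cp m f \<and> ZX X \<Omega> cm cp m f \<le> (\<Sum>k=1..m. \<sigma> k)"
proof -
  let ?\<Delta> = "Delta cm cp z" and ?l = "bar_len cm cp"
  define F where "F = {(\<Sum>k=1..m. ?l k * s k) + 2 * (\<Sum>k=1..m. ?l k * r k) | s r q.
      (\<forall>k\<in>{1..m}. s k \<ge> 0 \<and> r k \<ge> 0 \<and> coneK (r k) (s k) (q k)) \<and>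
      (\<forall>x\<in>interior_nodes X \<Omega>. BT cm cp m s x = 0 \<and> DT cm cp m q x = f x)}"
  \<comment> \<open>With \<open>s_hat\<^sub>k = \<sigma>\<^sub>k / l_hat\<^sub>k\<close> these are
    \<open>s\<^sub>k = s_hat\<^sub>k / J_kk\<close> and \<open>q\<^sub>k = \<Delta>\<^sub>k s_hat\<^sub>k / J_kk\<close>;
    \<open>r\<^sub>k\<close> makes the cone constraint tight.\<close>
  define s where "s k = \<sigma> k / (?l k * (1 + (?\<Delta> k)\<^sup>2))" for k
  define q where "q k = ?\<Delta> k * s k" for k
  define r where "r k = (?\<Delta> k)\<^sup>2 * s k / 2" for k
  have cone: "s k \<ge> 0 \<and> r k \<ge> 0 \<and> coneK (r k) (s k) (q k)" if "k \<in> {1..m}" for k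
  proof -
    have "s k \<ge> 0"
      using nonneg that by (simp add: s_def bar_len_def)
    moreover have "2 * r k * s k = (q k)\<^sup>2"
      by (simp add: r_def q_def power2_eq_square)
    ultimately show ?thesis
      by (simp add: r_def coneK_def)
  qed
  have "BT cm cp m s x $ 1 = (\<Sum>k=1..m. \<sigma> k * strain_hat_coeff cm cp z k (x, 1))"
    and "BT cm cp m s x $ 2 = (\<Sum>k=1..m. \<sigma> k * strain_hat_coeff cm cp z k (x, 2))" for x
    unfolding BT_def sum_component vector_scaleR_component
    by (auto intro!: sum.cong simp: s_def strain_hat_coeff_def divide_inverse power2_eq_square)
  moreover have "DT cm cp m q x = (\<Sum>k=1..m. \<sigma> k * strain_hat_coeff cm cp z k (x, 3))" for x
    unfolding DT_def
    by (intro sum.cong refl) (auto simp: q_def s_def strain_hat_coeff_def divide_inverse power2_eq_square)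
  ultimately have equil: "BT cm cp m s x = 0 \<and> DT cm cp m q x = f x" if "x \<in> interior_nodes X \<Omega>" for x
    using balance that by (auto simp: dofs_def dof_load_def vec_eq_iff forall_2)
  have "(\<Sum>k=1..m. ?l k * s k) + 2 * (\<Sum>k=1..m. ?l k * r k) = (\<Sum>k=1..m. ?l k * s k * (1 + (?\<Delta> k)\<^sup>2))"
    by (simp add: r_def sum.distrib sum_distrib_left algebra_simps)
  also have "\<dots> = (\<Sum>k=1..m. \<sigma> k)"
  proof (intro sum.cong refl)
    fix k assume "k \<in> {1..m}"
    then have "?l k \<noteq> 0" using distinct[of k] by (simp add: bar_len_def)
    moreover have "1 + (?\<Delta> k)\<^sup>2 \<noteq> 0" using zero_le_power2[of "?\<Delta> k"] by linarith
    ultimately show "?l k * s k * (1 + (?\<Delta> k)\<^sup>2) = \<sigma> k" by (simp add: s_def)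
  qed
  finally have "(\<Sum>k=1..m. \<sigma> k) \<in> F"
    unfolding F_def by (intro CollectI exI[of _ s] exI[of _ r] exI[of _ q]) (simp add: cone equil)
  moreover have "\<forall>y\<in>F. 0 \<le> y"
    unfolding F_def by (auto intro!: add_nonneg_nonneg sum_nonneg simp: bar_len_def)
  ultimately show ?thesis
    unfolding ZX_def F_def[symmetric] by (auto intro!: cInf_lower cInf_greatest bdd_belowI)
qed

lemma lhat_nonneg: "0 \<le> lhat cm cp z k"
  by (simp add: lhat_def Jkk_def bar_len_def)

lemma ZX_sq_le_of_compliance_le:
  assumes fin: "finite (interior_nodes X \<Omega>)" and distinct: "\<And>k. k \<in> {1..m} \<Longrightarrow> cm k \<noteq> cp k"
    and E0: "0 < E0" and a: "\<forall>k\<in>{1..m}. 0 \<le> a k"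
    and vol: "(\<Sum>k=1..m. a k * lhat cm cp z k) \<le> V0"
    and compliance: "CX X \<Omega> cm cp m f E0 z a \<le> ereal C"
  shows "(ZX X \<Omega> cm cp m f)\<^sup>2 \<le> 2 * E0 * V0 * C"
proof -
  interpret P: one_sided_quadratic "dofs X \<Omega>" "{1..m}" "dof_load f" "strain_hat_coeff cm cp z"
    "\<lambda>k. E0 * a k * lhat cm cp z k"
    using fin E0 a lhat_nonneg by unfold_locales (auto simp: dofs_def)
  have "P.energy v \<le> C" for v
  proof -
    let ?u = "dof_field X \<Omega> v"
    have "P.energy v = (\<Sum>x\<in>interior_nodes X \<Omega>. f x * ?u 3 x)
        - E0 / 2 * (\<Sum>k=1..m. (max 0 (strain_hat cm cp (?u 1) (?u 2) (?u 3) z k))\<^sup>2 * a k * lhat cm cp z k)"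
      unfolding P.energy_def P.load_def P.penalty_def P.stretch_def load_dofs
        strain_hat_dof_fields[OF fin]
      by (simp add: sum_distrib_left sum_divide_distrib algebra_simps)
    also have "ereal \<dots> \<le> CX X \<Omega> cm cp m f E0 z a"
      unfolding CX_def by (rule SUP_upper2[of "(?u 1, ?u 2, ?u 3)"]) (auto simp: nodal_dof_field)
    also note compliance
    finally show ?thesis by simp
  qed
  then obtain \<sigma> where \<sigma>: "\<forall>k\<in>{1..m}. 0 \<le> \<sigma> k"
      "\<forall>xj\<in>dofs X \<Omega>. (\<Sum>k=1..m. \<sigma> k * strain_hat_coeff cm cp z k xj) = dof_load f xj"
      "(\<Sum>k=1..m. \<sigma> k)\<^sup>2 \<le> 2 * C * (\<Sum>k=1..m. E0 * a k * lhat cm cp z k)"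
    using P.bounded_energy_imp_balancing_tensions by blast
  have "0 \<le> C" using \<open>P.energy (\<lambda>_. 0) \<le> C\<close> P.energy_zero by simp
  have "(ZX X \<Omega> cm cp m f)\<^sup>2 \<le> (\<Sum>k=1..m. \<sigma> k)\<^sup>2"
    using ZX_le_sum_of_balancing_tensions[OF distinct \<sigma>(1,2)] by (auto intro: power_mono)
  also have "\<dots> \<le> 2 * C * (E0 * (\<Sum>k=1..m. a k * lhat cm cp z k))"
    using \<sigma>(3) by (simp add: sum_distrib_left mult.assoc)
  also have "\<dots> \<le> 2 * C * (E0 * V0)"
    using vol E0 \<open>0 \<le> C\<close> by (intro mult_left_mono) auto
  finally show ?thesis by (simp add: algebra_simps)
qed

lemma compliance_ge_ZX_sq:
  assumes "finite (interior_nodes X \<Omega>)" and "\<And>k. k \<in> {1..m} \<Longrightarrow> cm k \<noteq> cp k"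
    and "0 < E0" and "0 < V0" and "\<forall>k\<in>{1..m}. 0 \<le> a k"
    and "(\<Sum>k=1..m. a k * lhat cm cp z k) \<le> V0"
  shows "ereal ((ZX X \<Omega> cm cp m f)\<^sup>2 / (2 * E0 * V0)) \<le> CX X \<Omega> cm cp m f E0 z a"
proof (rule ereal_le_real)
  fix C assume "CX X \<Omega> cm cp m f E0 z a \<le> ereal C"
  then have "(ZX X \<Omega> cm cp m f)\<^sup>2 \<le> 2 * E0 * V0 * C"
    using ZX_sq_le_of_compliance_le[OF assms(1,2,3,5,6)] by blast
  then show "ereal ((ZX X \<Omega> cm cp m f)\<^sup>2 / (2 * E0 * V0)) \<le> ereal C"
    using assms(3,4) by (simp add: divide_le_eq mult.commute)
qed

theorem lemma6p1:
  fixes \<Omega> X :: "(real^2) set" and cm cp :: "nat \<Rightarrow> real^2" and m :: nat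
    and f :: "real^2 \<Rightarrow> real" and E0 V0 :: real
  assumes "open \<Omega>" and "connected \<Omega>" and "bounded \<Omega>"
    and "finite X" and "X \<subseteq> closure \<Omega>"
    and "X - frontier \<Omega> \<subseteq> interior (convex hull (X \<inter> frontier \<Omega>))"
    and "bij_betw (\<lambda>k. {cm k, cp k}) {1..m} {{x, y} | x y. x \<in> X \<and> y \<in> X \<and> x \<noteq> y}"
    and "E0 > 0" and "V0 > 0"
  shows "CXmin X \<Omega> cm cp m f E0 V0 \<ge> ereal ((ZX X \<Omega> cm cp m f)\<^sup>2 / (2 * E0 * V0))"
proof -
  have "finite (interior_nodes X \<Omega>)"
    using \<open>finite X\<close> by (simp add: interior_nodes_def)
  moreover have "cm k \<noteq> cp k" if "k \<in> {1..m}" for k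
    using bij_betwE[OF assms(7)] that by (fastforce simp: doubleton_eq_iff)
  ultimately show ?thesis
    unfolding CXmin_def using compliance_ge_ZX_sq \<open>E0 > 0\<close> \<open>V0 > 0\<close>
    by (intro INF_greatest) (clarsimp simp del: ereal_less_eq)
qed

end
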